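(* Let $\lambda^*(q,K,C)$ denote the critical virality weight for story precision $q\in(1/2,1)$, news-feed size $K$, and capacity $C$ (considering only admissible triples, with integers $1\le C\le K/2$). Then: (i) $\lambda^*(q',K,C)\ge\lambda^*(q,K,C)$ if $q'>q$; (ii) $\lambda^*(q,K,C')\ge\lambda^*(q,K,C)$ if $C'<C$; (iii) $\lambda^*(q,K-2,C)\ge\lambda^*(q,K,C)$ for every $K$; (iv) $\lambda^*(q,K+1,C)\ge\lambda^*(q,K,C)$ if $K$ is odd; (v) $\lambda^*(q,K-1,C)\ge\lambda^*(q,K,C)$ if $K$ is odd. All of these inequalities are strict whenever $\lambda^*(q,K,C)$ is finite.
   Context: For parameters $q\in(1/2,1)$, integers $K\ge1$, $1\le C\le K/2$, and $\lambda\in[0,1]$, let $P_k(x,\lambda)=\mathbb{P}[\mathrm{Binom}(K,\lambda x+(1-\lambda)q)=k]$ for $x\in[0,1]$, and define the majority-rule inflow accuracy function $$\phi_{\sigma^{\mathrm{maj}}}(x)=\frac{q+C\sum_{k>K/2}P_k(x,\lambda)+qC\,P_{K/2}(x,\lambda)}{1+C},$$ where the term $P_{K/2}$ is present only when $K$ is even. (This is the expected fraction of new popularity score going to correct stories when agents, who share $C$ feed stories and post their own story of precision $q$, use the majority rule: share $C$ stories of the feed majority, breaking ties in favor of the own story.) The critical virality weight is $\lambda^*(q,K,C)=\inf\{\lambda\in[0,1]:\phi_{\sigma^{\mathrm{maj}}}(x)=x\text{ for some }x\in[0,1/2]\}$, with $\lambda^*=\infty$ if this set is empty. *)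

theory Defs
  imports "HOL-Analysis.Analysis" "HOL-Library.Extended_Real"
begin

definition Pk :: "real \<Rightarrow> nat \<Rightarrow> nat \<Rightarrow> real \<Rightarrow> real \<Rightarrow> real" where
  "Pk q K k lam x =
     (let p = lam * x + (1 - lam) * q in real (K choose k) * p ^ k * (1 - p) ^ (K - k))"

definition phi_maj :: "real \<Rightarrow> nat \<Rightarrow> nat \<Rightarrow> real \<Rightarrow> real \<Rightarrow> real" where
  "phi_maj q K C lam x =
     (q + real C * (\<Sum>k\<in>{k. K < 2 * k \<and> k \<le> K}. Pk q K k lam x)
        + (if even K then q * real C * Pk q K (K div 2) lam x else 0))
     / (1 + real C)"

definition lamstar :: "real \<Rightarrow> nat \<Rightarrow> nat \<Rightarrow> ereal" where
  "lamstar q K C =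
     (let S = {lam \<in> {0..1}. \<exists>x\<in>{0..1/2}. phi_maj q K C lam x = x}
      in if S = {} then \<infinity> else ereal (Inf S))"

end

theory Submission
  imports Defs
begin

text \<open>
  With p = lam * x + (1 - lam) * q the map is phi = (q + C * G(p)) / (1 + C), where G(p) is the
  probability that the majority of K feed stories, each correct with probability p, is correct
  (a tie defers to the own story).  At a fixed point x \<le> 1/2 one finds 0 < p < 1/2 and G(p) < x.
  Each item then says that at every fixed point of the map with the larger critical weight the
  other map lies strictly below the diagonal: for q and C by monotonicity, for K by closed forms
  of G(K') - G(K), multiples of powers of p(1 - p) whose sign is fixed by p < 1/2 < q.  At the
  least fixed-point weight (attained by compactness, and positive) continuity keeps the other map
  below the diagonal for a slightly smaller weight, where it is positive at x = 0, so the
  intermediate value theorem gives it a fixed point there.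
\<close>

definition binom_prob :: "nat \<Rightarrow> nat \<Rightarrow> real \<Rightarrow> real" where
  "binom_prob n k p = real (n choose k) * p ^ k * (1 - p) ^ (n - k)"

definition binom_tail :: "nat \<Rightarrow> nat \<Rightarrow> real \<Rightarrow> real" where
  "binom_tail n j p = (\<Sum>k=j..n. binom_prob n k p)"

lemma binom_prob_eq_0: "n < k \<Longrightarrow> binom_prob n k p = 0"
  by (simp add: binom_prob_def)

lemma binom_prob_nonneg: "0 \<le> p \<Longrightarrow> p \<le> 1 \<Longrightarrow> 0 \<le> binom_prob n k p"
  by (simp add: binom_prob_def)

lemma binom_prob_Suc_Suc:
  "binom_prob (Suc n) (Suc k) p = p * binom_prob n k p + (1 - p) * binom_prob n (Suc k) p"
proof (cases "k < n")
  case True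
  then obtain d where "n = Suc (k + d)"
    using less_iff_Suc_add by auto
  then show ?thesis
    by (simp add: binom_prob_def algebra_simps)
next
  case False
  then consider "k = n" | "n < k"
    by linarith
  then show ?thesis
    by cases (simp_all add: binom_prob_def binomial_eq_0)
qed

lemma binom_tail_eq: "binom_tail n j p = binom_prob n j p + binom_tail n (Suc j) p"
proof (cases "j \<le> n")
  case True
  then show ?thesis
    by (simp add: binom_tail_def sum.atLeast_Suc_atMost)
next
  case False
  then show ?thesis
    by (simp add: binom_tail_def binom_prob_eq_0)
qed

lemma binom_tail_Suc_Suc:
  "binom_tail (Suc n) (Suc j) p = p * binom_tail n j p + (1 - p) * binom_tail n (Suc j) p"
proof -
  have "binom_tail (Suc n) (Suc j) p = (\<Sum>k=j..n. binom_prob (Suc n) (Suc k) p)"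
    unfolding binom_tail_def by (rule sum.shift_bounds_cl_Suc_ivl)
  also have "\<dots> = p * binom_tail n j p + (1 - p) * (\<Sum>k=Suc j..Suc n. binom_prob n k p)"
    unfolding binom_tail_def binom_prob_Suc_Suc sum.shift_bounds_cl_Suc_ivl
    by (simp add: sum.distrib sum_distrib_left)
  also have "(\<Sum>k=Suc j..Suc n. binom_prob n k p) = binom_tail n (Suc j) p"
    by (cases "j \<le> n") (simp_all add: binom_tail_def binom_prob_eq_0)
  finally show ?thesis .
qed

lemma binom_tail_0: "binom_tail n 0 p = 1"
  using binomial_ring[of p "1 - p" n]
  by (simp add: binom_tail_def binom_prob_def atLeast0AtMost)

lemma binom_tail_nonneg: "0 \<le> p \<Longrightarrow> p \<le> 1 \<Longrightarrow> 0 \<le> binom_tail n j p"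
  unfolding binom_tail_def by (intro sum_nonneg binom_prob_nonneg)

text \<open>The recursion writes a tail as a p-weighted mixture of two nested tails.\<close>
lemma binom_tail_mono:
  assumes "0 \<le> p" "p \<le> p'" "p' \<le> 1"
  shows "binom_tail n j p \<le> binom_tail n j p'"
  using assms
proof (induction n arbitrary: j)
  case 0
  then show ?case
    by (cases j) (simp_all add: binom_tail_def binom_prob_def)
next
  case (Suc n)
  show ?case
  proof (cases j)
    case 0
    then show ?thesis
      by (simp add: binom_tail_0)
  next
    case (Suc i)
    have "binom_tail n (Suc i) p \<le> binom_tail n i p"
      using binom_tail_eq[of n i p] binom_prob_nonneg[of p n i] Suc.prems by simp
    then have "0 \<le> (p' - p) * (binom_tail n i p - binom_tail n (Suc i) p)"
      using Suc.prems by simp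
    then have "p * binom_tail n i p + (1 - p) * binom_tail n (Suc i) p
        \<le> p' * binom_tail n i p + (1 - p') * binom_tail n (Suc i) p"
      by (simp add: algebra_simps)
    also have "\<dots> \<le> p' * binom_tail n i p' + (1 - p') * binom_tail n (Suc i) p'"
      using Suc.IH Suc.prems by (intro add_mono mult_left_mono) auto
    finally show ?thesis
      unfolding Suc binom_tail_Suc_Suc .
  qed
qed

lemma binomial_central_Suc: "(2*m+2) choose (m+1) = 2 * ((2*m+1) choose m)"
  using binomial_symmetric[of m "2*m+1"] by simp

lemma binomial_odd_le_twice_central: "(2*k+3) choose (k+1) \<le> 2 * ((2*k+2) choose (k+1))"
proof -
  have "(2*k+2) choose k < (2*k+2) choose Suc k"
    by (rule binomial_less_binomial_Suc) simp
  then have "Suc (2*k+2) choose Suc k \<le> 2 * ((2*k+2) choose Suc k)"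
    using binomial_Suc_Suc[of "2*k+2" k] by linarith
  then show ?thesis
    by (simp only: Suc_eq_plus1 add.assoc numeral_plus_one one_plus_numeral semiring_norm)
qed

lemma binom_prob_odd_pivotal:
  "p * binom_prob (2*m+1) m p = real ((2*m+1) choose m) * (p * (1 - p)) ^ (m+1)"
  "(1 - p) * binom_prob (2*m+1) (m+1) p = real ((2*m+1) choose m) * (p * (1 - p)) ^ (m+1)"
  using binomial_symmetric[of m "2*m+1"]
  by (simp_all add: binom_prob_def power_mult_distrib mult_ac)

definition maj_accuracy :: "real \<Rightarrow> nat \<Rightarrow> real \<Rightarrow> real" where
  "maj_accuracy q K p =
     binom_tail K (K div 2 + 1) p + (if even K then q * binom_prob K (K div 2) p else 0)"

lemma phi_maj_eq_maj_accuracy: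
  "phi_maj q K C lam x = (q + real C * maj_accuracy q K (lam * x + (1 - lam) * q)) / (1 + real C)"
proof -
  have "{k. K < 2 * k \<and> k \<le> K} = {K div 2 + 1..K}"
    by auto
  then show ?thesis
    by (simp add: phi_maj_def maj_accuracy_def binom_tail_def Pk_def binom_prob_def
        algebra_simps)
qed

lemma maj_accuracy_odd: "maj_accuracy q (2*m+1) p = binom_tail (2*m+1) (m+1) p"
  by (simp add: maj_accuracy_def)

lemma maj_accuracy_even:
  "maj_accuracy q (2*m) p = q * binom_tail (2*m) m p + (1 - q) * binom_tail (2*m) (m+1) p"
  using binom_tail_eq[of "2*m" m p] by (simp add: maj_accuracy_def algebra_simps)

lemma maj_accuracy_nonneg: "0 \<le> q \<Longrightarrow> 0 \<le> p \<Longrightarrow> p \<le> 1 \<Longrightarrow> 0 \<le> maj_accuracy q K p"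
  by (simp add: maj_accuracy_def binom_tail_nonneg binom_prob_nonneg)

lemma maj_accuracy_mono:
  assumes "0 \<le> q" "q \<le> 1" "0 \<le> p" "p \<le> p'" "p' \<le> 1"
  shows "maj_accuracy q K p \<le> maj_accuracy q K p'"
proof (cases "even K")
  case True
  then obtain m where K: "K = 2*m" by blast
  show ?thesis
    unfolding K maj_accuracy_even using binom_tail_mono[OF assms(3-5)] assms(1,2)
    by (intro add_mono mult_left_mono) auto
next
  case False
  then obtain m where K: "K = 2*m+1" by (rule oddE)
  show ?thesis
    unfolding K maj_accuracy_odd by (rule binom_tail_mono[OF assms(3-5)])
qed

lemma maj_accuracy_mono_precision:
  "q \<le> q' \<Longrightarrow> 0 \<le> p \<Longrightarrow> p \<le> 1 \<Longrightarrow> maj_accuracy q K p \<le> maj_accuracy q' K p"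
  using binom_prob_nonneg[of p K "K div 2"] by (simp add: maj_accuracy_def mult_right_mono)

lemma maj_accuracy_Suc_odd_diff:
  "maj_accuracy q (2*m+2) p - maj_accuracy q (2*m+1) p
     = (2*q - 1) * real ((2*m+1) choose m) * (p * (1 - p)) ^ (m+1)"
proof -
  have G: "maj_accuracy q (2*m+2) p
      = binom_tail (2*m+2) (m+2) p + q * binom_prob (2*m+2) (m+1) p"
    by (simp add: maj_accuracy_def)
  have tail: "binom_tail (2*m+2) (m+2) p
      = p * binom_tail (2*m+1) (m+1) p + (1 - p) * binom_tail (2*m+1) (m+2) p"
    using binom_tail_Suc_Suc[of "2*m+1" "m+1" p] by simp
  have tail': "binom_tail (2*m+1) (m+1) p
      = binom_prob (2*m+1) (m+1) p + binom_tail (2*m+1) (m+2) p"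
    using binom_tail_eq[of "2*m+1" "m+1" p] by simp
  have tie: "binom_prob (2*m+2) (m+1) p
      = p * binom_prob (2*m+1) m p + (1 - p) * binom_prob (2*m+1) (m+1) p"
    using binom_prob_Suc_Suc[of "2*m+1" m p] by simp
  have "maj_accuracy q (2*m+2) p - maj_accuracy q (2*m+1) p
      = q * (p * binom_prob (2*m+1) m p) - (1 - q) * ((1 - p) * binom_prob (2*m+1) (m+1) p)"
    unfolding G maj_accuracy_odd tail tie tail' by (simp add: algebra_simps)
  then show ?thesis
    unfolding binom_prob_odd_pivotal by (simp add: algebra_simps)
qed

lemma maj_accuracy_even_Suc_diff:
  "maj_accuracy q (2*m) p - maj_accuracy q (2*m+1) p
     = (q - p) * real ((2*m) choose m) * (p * (1 - p)) ^ m"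
proof -
  have "binom_tail (2*m+1) (m+1) p = p * binom_tail (2*m) m p + (1 - p) * binom_tail (2*m) (m+1) p"
    using binom_tail_Suc_Suc[of "2*m" m p] by simp
  then have "maj_accuracy q (2*m) p - maj_accuracy q (2*m+1) p
      = (q - p) * (binom_tail (2*m) m p - binom_tail (2*m) (m+1) p)"
    unfolding maj_accuracy_even maj_accuracy_odd by (simp add: algebra_simps)
  also have "binom_tail (2*m) m p - binom_tail (2*m) (m+1) p = binom_prob (2*m) m p"
    using binom_tail_eq[of "2*m" m p] by simp
  finally show ?thesis
    by (simp add: binom_prob_def power_mult_distrib mult_ac)
qed

lemma maj_accuracy_odd_step_diff:
  "maj_accuracy q (2*m+3) p - maj_accuracy q (2*m+1) p
     = (2*p - 1) * real ((2*m+1) choose m) * (p * (1 - p)) ^ (m+1)"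
proof -
  have "2*(m+1) = 2*m+2" "2*(m+1)+1 = 2*m+3"
    by simp_all
  then have "maj_accuracy q (2*m+2) p - maj_accuracy q (2*m+3) p
      = (q - p) * real ((2*m+2) choose (m+1)) * (p * (1 - p)) ^ (m+1)"
    using maj_accuracy_even_Suc_diff[of q "m+1" p] by (simp only:)
  moreover have "(2*p - 1) * real ((2*m+1) choose m) * (p * (1 - p)) ^ (m+1)
      = (2*q - 1) * real ((2*m+1) choose m) * (p * (1 - p)) ^ (m+1)
        - (q - p) * real ((2*m+2) choose (m+1)) * (p * (1 - p)) ^ (m+1)"
    unfolding binomial_central_Suc by (simp add: algebra_simps)
  ultimately show ?thesis
    using maj_accuracy_Suc_odd_diff[of q m p] by linarith
qed

lemma maj_accuracy_even_step_diff:
  "maj_accuracy q (2*k+4) p - maj_accuracy q (2*k+2) p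
     = (2*q - 1) * real ((2*k+3) choose (k+1)) * (p * (1 - p)) ^ (k+2)
       - (q - p) * real ((2*k+2) choose (k+1)) * (p * (1 - p)) ^ (k+1)"
proof -
  have "2*(k+1) = 2*k+2" "2*(k+1)+1 = 2*k+3" "2*(k+1)+2 = 2*k+4" "k+1+1 = k+2"
    by simp_all
  then show ?thesis
    using maj_accuracy_Suc_odd_diff[of q "k+1" p] maj_accuracy_even_Suc_diff[of q "k+1" p]
    by (simp only:)
qed

lemma maj_accuracy_odd_less_Suc:
  assumes "0 < p" "p < 1" "1/2 < q"
  shows "maj_accuracy q (2*m+1) p < maj_accuracy q (2*m+2) p"
proof -
  have "0 < (2*q - 1) * real ((2*m+1) choose m) * (p * (1 - p)) ^ (m+1)"
    using assms by simp
  then show ?thesis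
    using maj_accuracy_Suc_odd_diff[of q m p] by linarith
qed

lemma maj_accuracy_odd_less_even:
  assumes "0 < p" "p < q" "p < 1"
  shows "maj_accuracy q (2*m+1) p < maj_accuracy q (2*m) p"
proof -
  have "0 < (q - p) * real ((2*m) choose m) * (p * (1 - p)) ^ m"
    using assms by simp
  then show ?thesis
    using maj_accuracy_even_Suc_diff[of q m p] by linarith
qed

lemma maj_accuracy_odd_step_less:
  assumes "0 < p" "p < 1/2"
  shows "maj_accuracy q (2*m+3) p < maj_accuracy q (2*m+1) p"
proof -
  have "(2*p - 1) * real ((2*m+1) choose m) * (p * (1 - p)) ^ (m+1) < 0"
    using assms by (simp add: mult_neg_pos)
  then show ?thesis
    using maj_accuracy_odd_step_diff[of q m p] by linarith
qed

lemma maj_accuracy_even_step_less: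
  assumes "0 < p" "p < 1/2" "1/2 \<le> q"
  shows "maj_accuracy q (2*k+4) p < maj_accuracy q (2*k+2) p"
proof -
  define r where "r = p * (1 - p)"
  define c where "c = real ((2*k+2) choose (k+1))"
  have "0 < r" "0 < c"
    using assms by (simp_all add: r_def c_def del: binomial_Suc_Suc)
  have "(2*q - 1) * real ((2*k+3) choose (k+1)) * r ^ (k+2) \<le> (2*q - 1) * (2 * c) * r ^ (k+2)"
    using binomial_odd_le_twice_central[of k] \<open>0 < r\<close> assms
    unfolding c_def by (intro mult_right_mono mult_left_mono) simp_all
  also have "\<dots> = c * r ^ (k+1) * (2 * (2*q - 1) * r)"
    by (simp add: algebra_simps)
  also have "\<dots> < c * r ^ (k+1) * (q - p)"
  proof (rule mult_strict_left_mono)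
    have "q - p - 2 * (2*q - 1) * r = (1 - 2*p) * (q * (1 - 2*p) + p)"
      by (simp add: r_def algebra_simps)
    moreover have "0 < (1 - 2*p) * (q * (1 - 2*p) + p)"
      using assms by (intro mult_pos_pos add_nonneg_pos) simp_all
    ultimately show "2 * (2*q - 1) * r < q - p"
      by linarith
    show "0 < c * r ^ (k+1)"
      using \<open>0 < r\<close> \<open>0 < c\<close> by simp
  qed
  finally show ?thesis
    using maj_accuracy_even_step_diff[of q k p] unfolding r_def c_def by (simp add: algebra_simps)
qed

lemma maj_accuracy_ge_half:
  assumes "1/2 \<le> q" "1/2 \<le> p" "p \<le> 1"
  shows "1/2 \<le> maj_accuracy q K p"
proof -
  have odd: "1/2 \<le> maj_accuracy q (2*m+1) p" for m
  proof (induction m)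
    case 0
    then show ?case
      using assms by (simp add: maj_accuracy_def binom_tail_def binom_prob_def)
  next
    case (Suc m)
    have size: "2 * Suc m + 1 = 2*m+3"
      by simp
    have "0 \<le> (2*p - 1) * real ((2*m+1) choose m) * (p * (1 - p)) ^ (m+1)"
      using assms by simp
    then show ?case
      unfolding size using Suc.IH maj_accuracy_odd_step_diff[of q m p] by linarith
  qed
  show ?thesis
  proof (cases "even K")
    case False
    then obtain m where "K = 2*m+1" by (rule oddE)
    then show ?thesis using odd by simp
  next
    case True
    then obtain m where K: "K = 2*m" by blast
    show ?thesis
    proof (cases m)
      case 0
      then show ?thesis
        using K assms by (simp add: maj_accuracy_def binom_prob_def binom_tail_def)
    next
      case (Suc j)
      have "0 \<le> (2*q - 1) * real ((2*j+1) choose j) * (p * (1 - p)) ^ (j+1)"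
        using assms by simp
      then show ?thesis
        using odd[of j] maj_accuracy_Suc_odd_diff[of q j p] K Suc by simp
    qed
  qed
qed

definition fixpoint_weights :: "(real \<Rightarrow> real \<Rightarrow> real) \<Rightarrow> real set" where
  "fixpoint_weights f = {lam \<in> {0..1}. \<exists>x\<in>{0..1/2}. f lam x = x}"

definition critical_weight :: "(real \<Rightarrow> real \<Rightarrow> real) \<Rightarrow> ereal" where
  "critical_weight f =
     (if fixpoint_weights f = {} then \<infinity> else ereal (Inf (fixpoint_weights f)))"

lemma lamstar_eq_critical_weight: "lamstar q K C = critical_weight (phi_maj q K C)"
  by (simp add: lamstar_def critical_weight_def fixpoint_weights_def)

lemma Inf_fixpoint_weights_mem:
  assumes cont: "continuous_on UNIV (\<lambda>z. f (fst z) (snd z))"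
    and ne: "fixpoint_weights f \<noteq> {}"
  shows "Inf (fixpoint_weights f) \<in> fixpoint_weights f"
proof -
  have "closed {z :: real \<times> real. f (fst z) (snd z) = snd z}"
    by (rule closed_Collect_eq[OF cont continuous_on_snd[OF continuous_on_id]])
  then have "compact (({0..1} \<times> {0..1/2}) \<inter> {z :: real \<times> real. f (fst z) (snd z) = snd z})"
    by (intro compact_Int_closed compact_Times compact_Icc)
  then have "compact (fst ` (({0..1} \<times> {0..1/2}) \<inter> {z. f (fst z) (snd z) = snd z}))"
    by (intro compact_continuous_image continuous_on_fst continuous_on_id)
  moreover have "fst ` (({0..1} \<times> {0..1/2}) \<inter> {z. f (fst z) (snd z) = snd z})
      = fixpoint_weights f"
    by (force simp: fixpoint_weights_def)
  ultimately have "compact (fixpoint_weights f)"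
    by simp
  moreover have "bdd_below (fixpoint_weights f)"
    by (rule bdd_belowI[of _ 0]) (simp add: fixpoint_weights_def)
  ultimately show ?thesis
    using ne by (intro closed_contains_Inf compact_imp_closed)
qed

lemma fixpoint_weight_less:
  assumes cont: "continuous_on UNIV (\<lambda>z. f (fst z) (snd z))"
    and pos: "\<And>lam. 0 \<le> lam \<Longrightarrow> lam \<le> 1 \<Longrightarrow> 0 < f lam 0"
    and lam0: "0 < lam0" "lam0 \<le> 1" and x0: "0 \<le> x0" "x0 \<le> 1/2"
    and below: "f lam0 x0 < x0"
  obtains lam1 where "lam1 \<in> fixpoint_weights f" "lam1 < lam0"
proof -
  have "continuous_on UNIV (\<lambda>lam. f (fst (lam, x)) (snd (lam, x)))" for x
    by (rule continuous_on_compose2[OF cont]) (auto intro!: continuous_intros)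
  then have cont_lam: "continuous_on UNIV (\<lambda>lam. f lam x)" for x
    by simp
  have "continuous_on UNIV (\<lambda>x. f (fst (lam, x)) (snd (lam, x)))" for lam
    by (rule continuous_on_compose2[OF cont]) (auto intro!: continuous_intros)
  then have cont_x: "continuous_on UNIV (\<lambda>x. f lam x)" for lam
    by simp
  have "open {lam. f lam x0 < x0}"
    by (intro open_Collect_less cont_lam continuous_intros)
  then obtain d where "0 < d" and d: "ball lam0 d \<subseteq> {lam. f lam x0 < x0}"
    using below by (force simp: open_contains_ball)
  define lam1 where "lam1 = max 0 (lam0 - d/2)"
  have lam1: "0 \<le> lam1" "lam1 < lam0" "lam1 \<le> 1"
    using lam0 \<open>0 < d\<close> by (auto simp: lam1_def)
  have "lam1 \<in> ball lam0 d"
    using lam0 \<open>0 < d\<close> by (auto simp: lam1_def dist_real_def)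
  then have "f lam1 x0 - x0 \<le> 0"
    using d by auto
  moreover have "0 \<le> f lam1 0 - 0"
    using pos[OF lam1(1,3)] by simp
  moreover have "continuous_on {0..x0} (\<lambda>x. f lam1 x - x)"
    by (intro continuous_intros continuous_on_subset[OF cont_x]) auto
  ultimately obtain x where "0 \<le> x" "x \<le> x0" "f lam1 x - x = 0"
    using IVT2'[of "\<lambda>x. f lam1 x - x" x0 0 0] x0 by auto
  then have "lam1 \<in> fixpoint_weights f"
    using lam1 x0 by (auto simp: fixpoint_weights_def)
  then show ?thesis
    using lam1 that by blast
qed

lemma critical_weight_less:
  assumes contA: "continuous_on UNIV (\<lambda>z. fA (fst z) (snd z))"
    and contB: "continuous_on UNIV (\<lambda>z. fB (fst z) (snd z))"
    and posB: "\<And>lam. 0 \<le> lam \<Longrightarrow> lam \<le> 1 \<Longrightarrow> 0 < fB lam 0"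
    and no_fixpoint_A: "\<And>x. 0 \<le> x \<Longrightarrow> x \<le> 1/2 \<Longrightarrow> fA 0 x \<noteq> x"
    and below: "\<And>lam x. 0 \<le> lam \<Longrightarrow> lam \<le> 1 \<Longrightarrow> 0 \<le> x \<Longrightarrow> x \<le> 1/2 \<Longrightarrow>
      fA lam x = x \<Longrightarrow> fB lam x < x"
    and finite: "critical_weight fA \<noteq> \<infinity>"
  shows "critical_weight fB < critical_weight fA"
proof -
  define lam0 where "lam0 = Inf (fixpoint_weights fA)"
  have ne: "fixpoint_weights fA \<noteq> {}"
    using finite by (auto simp: critical_weight_def)
  then have "lam0 \<in> fixpoint_weights fA"
    unfolding lam0_def by (rule Inf_fixpoint_weights_mem[OF contA])
  then obtain x0 where lam0: "0 \<le> lam0" "lam0 \<le> 1" and x0: "0 \<le> x0" "x0 \<le> 1/2"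
    and fix0: "fA lam0 x0 = x0"
    by (auto simp: fixpoint_weights_def)
  have "0 < lam0"
    using lam0(1) no_fixpoint_A[OF x0] fix0 by (cases "lam0 = 0") auto
  then obtain lam1 where lam1: "lam1 \<in> fixpoint_weights fB" "lam1 < lam0"
    using fixpoint_weight_less[OF contB posB _ lam0(2) x0 below[OF lam0 x0 fix0]] by blast
  moreover have "bdd_below (fixpoint_weights fB)"
    by (rule bdd_belowI[of _ 0]) (simp add: fixpoint_weights_def)
  ultimately have "Inf (fixpoint_weights fB) < lam0"
    using cInf_lower by fastforce
  then show ?thesis
    using lam1(1) ne by (auto simp: critical_weight_def lam0_def)
qed

lemma continuous_on_phi_maj: "continuous_on UNIV (\<lambda>z. phi_maj q K C (fst z) (snd z))"
  unfolding phi_maj_def Pk_def Let_def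
  by (cases "even K") (auto intro!: continuous_intros simp: add_nonneg_eq_0_iff)

lemma phi_maj_pos:
  assumes "0 < q" "q \<le> 1" "0 \<le> lam" "lam \<le> 1" "0 \<le> x" "x \<le> 1"
  shows "0 < phi_maj q K C lam x"
proof -
  have "lam * x + (1 - lam) * q \<le> lam * 1 + (1 - lam) * 1"
    using assms by (intro add_mono mult_left_mono) auto
  then have "0 \<le> maj_accuracy q K (lam * x + (1 - lam) * q)"
    using assms by (intro maj_accuracy_nonneg) auto
  then show ?thesis
    unfolding phi_maj_eq_maj_accuracy using assms by (simp add: add_pos_nonneg)
qed

lemma phi_maj_fixed_point:
  assumes q: "1/2 < q" "q < 1" and C: "1 \<le> C"
    and lam: "0 \<le> lam" "lam \<le> 1" and x: "0 \<le> x" "x \<le> 1/2"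
    and fixed: "phi_maj q K C lam x = x"
  defines "p \<equiv> lam * x + (1 - lam) * q"
  shows "maj_accuracy q K p < x" "0 < p" "p < 1/2" "0 < lam"
proof -
  have "0 \<le> (1 - lam) * (q - x)" "0 \<le> lam * (q - x)"
    using q lam x by simp_all
  then have p: "x \<le> p" "p \<le> q"
    by (simp_all add: p_def algebra_simps)
  have "q + real C * maj_accuracy q K p = (1 + real C) * x"
    using fixed C by (simp add: phi_maj_eq_maj_accuracy p_def field_simps)
  then have "real C * (maj_accuracy q K p - x) = x - q"
    by (simp add: algebra_simps)
  then have "real C * (maj_accuracy q K p - x) < 0"
    using q x by simp
  with C show G: "maj_accuracy q K p < x"
    by (simp add: mult_less_0_iff)
  moreover have "0 \<le> maj_accuracy q K p"
    using p q x by (intro maj_accuracy_nonneg) auto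
  ultimately show "0 < p"
    using p by linarith
  show "p < 1/2"
    using maj_accuracy_ge_half[of q p K] G p q x by linarith
  then show "0 < lam"
    using lam q by (cases "lam = 0") (auto simp: p_def)
qed

lemma lamstar_less_if_below_diagonal:
  assumes qA: "1/2 < qA" "qA < 1" and CA: "1 \<le> CA" and qB: "0 < qB" "qB \<le> 1"
    and below: "\<And>lam x. 0 \<le> lam \<Longrightarrow> lam \<le> 1 \<Longrightarrow> 0 \<le> x \<Longrightarrow> x \<le> 1/2 \<Longrightarrow>
      phi_maj qA KA CA lam x = x \<Longrightarrow> phi_maj qB KB CB lam x < x"
  shows "lamstar qA KA CA \<ge> lamstar qB KB CB \<and>
    (lamstar qB KB CB \<noteq> \<infinity> \<longrightarrow> lamstar qA KA CA > lamstar qB KB CB)"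
proof -
  have "lamstar qB KB CB < lamstar qA KA CA" if "lamstar qA KA CA \<noteq> \<infinity>"
    unfolding lamstar_eq_critical_weight
  proof (rule critical_weight_less[OF continuous_on_phi_maj continuous_on_phi_maj])
    show "0 < phi_maj qB KB CB lam 0" if "0 \<le> lam" "lam \<le> 1" for lam
      using phi_maj_pos qB that by simp
    show "phi_maj qA KA CA 0 x \<noteq> x" if "0 \<le> x" "x \<le> 1/2" for x
      using phi_maj_fixed_point(4)[OF qA CA order_refl zero_le_one that, of KA] by auto
  qed (use below that lamstar_eq_critical_weight in auto)
  then show ?thesis
    by (cases "lamstar qA KA CA = \<infinity>") auto
qed

lemma lamstar_less_if_maj_accuracy_less:
  assumes q: "1/2 < q" "q < 1" and C: "1 \<le> C"
    and less: "\<And>p. 0 < p \<Longrightarrow> p < 1/2 \<Longrightarrow> maj_accuracy q K p < maj_accuracy q K' p"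
  shows "lamstar q K' C \<ge> lamstar q K C \<and>
    (lamstar q K C \<noteq> \<infinity> \<longrightarrow> lamstar q K' C > lamstar q K C)"
proof (rule lamstar_less_if_below_diagonal[OF q C])
  fix lam x :: real
  assume lam: "0 \<le> lam" "lam \<le> 1" and x: "0 \<le> x" "x \<le> 1/2"
    and fixed: "phi_maj q K' C lam x = x"
  let ?p = "lam * x + (1 - lam) * q"
  have "maj_accuracy q K ?p < maj_accuracy q K' ?p"
    using less phi_maj_fixed_point(2,3)[OF q C lam x fixed] by blast
  then have "phi_maj q K C lam x < phi_maj q K' C lam x"
    using C by (simp add: phi_maj_eq_maj_accuracy divide_strict_right_mono add_pos_pos)
  with fixed show "phi_maj q K C lam x < x"
    by simp
qed (use q in auto)

lemma lamstar_mono_precision: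
  assumes q: "1/2 < q" "q < 1" and C: "1 \<le> C" and q': "q < q'" "q' < 1"
  shows "lamstar q' K C \<ge> lamstar q K C \<and>
    (lamstar q K C \<noteq> \<infinity> \<longrightarrow> lamstar q' K C > lamstar q K C)"
proof (rule lamstar_less_if_below_diagonal)
  fix lam x :: real
  assume lam: "0 \<le> lam" "lam \<le> 1" and x: "0 \<le> x" "x \<le> 1/2"
    and fixed: "phi_maj q' K C lam x = x"
  define p where "p = lam * x + (1 - lam) * q"
  define p' where "p' = lam * x + (1 - lam) * q'"
  have "0 \<le> p" "p \<le> p'"
    using lam x q q' by (simp_all add: p_def p'_def mult_left_mono)
  moreover have "p' \<le> lam * 1 + (1 - lam) * 1"
    unfolding p'_def using lam x q' by (intro add_mono mult_left_mono) auto
  ultimately have "maj_accuracy q K p \<le> maj_accuracy q' K p'"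
    using q q' maj_accuracy_mono[of q p p' K] maj_accuracy_mono_precision[of q q' p' K]
    by simp
  then have "q + real C * maj_accuracy q K p < q' + real C * maj_accuracy q' K p'"
    using q' by (simp add: add_less_le_mono mult_left_mono)
  then have "phi_maj q K C lam x < phi_maj q' K C lam x"
    unfolding phi_maj_eq_maj_accuracy p_def[symmetric] p'_def[symmetric]
    by (simp add: divide_strict_right_mono add_pos_nonneg)
  with fixed show "phi_maj q K C lam x < x"
    by simp
qed (use q q' C in auto)

lemma lamstar_antimono_capacity:
  assumes q: "1/2 < q" "q < 1" and C: "1 \<le> C'" "C' < C"
  shows "lamstar q K C' \<ge> lamstar q K C \<and>
    (lamstar q K C \<noteq> \<infinity> \<longrightarrow> lamstar q K C' > lamstar q K C)"
proof (rule lamstar_less_if_below_diagonal)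
  fix lam x :: real
  assume lam: "0 \<le> lam" "lam \<le> 1" and x: "0 \<le> x" "x \<le> 1/2"
    and fixed: "phi_maj q K C' lam x = x"
  define p where "p = lam * x + (1 - lam) * q"
  have "maj_accuracy q K p < x"
    unfolding p_def by (rule phi_maj_fixed_point(1)[OF q C(1) lam x fixed])
  then have "(real C - real C') * maj_accuracy q K p < (real C - real C') * x"
    using C by simp
  moreover have "q + real C' * maj_accuracy q K p = (1 + real C') * x"
    using fixed by (simp add: phi_maj_eq_maj_accuracy p_def field_simps add_pos_nonneg)
  ultimately have "q + real C * maj_accuracy q K p < (1 + real C) * x"
    by (simp add: algebra_simps)
  then show "phi_maj q K C lam x < x"
    unfolding phi_maj_eq_maj_accuracy p_def[symmetric] by (simp add: field_simps add_pos_nonneg)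
qed (use q C in auto)

lemma lamstar_feed_minus_two:
  assumes q: "1/2 < q" "q < 1" and C: "1 \<le> C" "2 * C \<le> K - 2"
  shows "lamstar q (K - 2) C \<ge> lamstar q K C \<and>
    (lamstar q K C \<noteq> \<infinity> \<longrightarrow> lamstar q (K - 2) C > lamstar q K C)"
proof (rule lamstar_less_if_maj_accuracy_less[OF q C(1)])
  fix p :: real
  assume p: "0 < p" "p < 1/2"
  show "maj_accuracy q K p < maj_accuracy q (K - 2) p"
  proof (cases "even K")
    case True
    then obtain j where "K = 2*j"
      by blast
    with C have "K = 2*(j-2)+4" "K - 2 = 2*(j-2)+2"
      by auto
    then show ?thesis
      using maj_accuracy_even_step_less[of p q "j-2"] p q by simp
  next
    case False
    then obtain j where "K = 2*j+1"
      by (rule oddE)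
    with C have "K = 2*(j-1)+3" "K - 2 = 2*(j-1)+1"
      by auto
    then show ?thesis
      using maj_accuracy_odd_step_less[of p q "j-1"] p by simp
  qed
qed

lemma lamstar_odd_feed_Suc:
  assumes q: "1/2 < q" "q < 1" and C: "1 \<le> C" and K: "odd K"
  shows "lamstar q (K + 1) C \<ge> lamstar q K C \<and>
    (lamstar q K C \<noteq> \<infinity> \<longrightarrow> lamstar q (K + 1) C > lamstar q K C)"
proof (rule lamstar_less_if_maj_accuracy_less[OF q C])
  fix p :: real
  assume "0 < p" "p < 1/2"
  moreover obtain m where "K = 2*m+1"
    using K by (rule oddE)
  ultimately show "maj_accuracy q K p < maj_accuracy q (K + 1) p"
    using maj_accuracy_odd_less_Suc[of p q m] q by simp
qed

lemma lamstar_odd_feed_pred: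
  assumes q: "1/2 < q" "q < 1" and C: "1 \<le> C" and K: "odd K"
  shows "lamstar q (K - 1) C \<ge> lamstar q K C \<and>
    (lamstar q K C \<noteq> \<infinity> \<longrightarrow> lamstar q (K - 1) C > lamstar q K C)"
proof (rule lamstar_less_if_maj_accuracy_less[OF q C])
  fix p :: real
  assume "0 < p" "p < 1/2"
  moreover obtain m where "K = 2*m+1"
    using K by (rule oddE)
  ultimately show "maj_accuracy q K p < maj_accuracy q (K - 1) p"
    using maj_accuracy_odd_less_even[of p q m] q by simp
qed

theorem proposition4:
  fixes q q' :: real and K C C' :: nat
  assumes q: "1/2 < q" "q < 1"
    and C: "1 \<le> C" "2 * C \<le> K"
  shows
   "(q < q' \<and> q' < 1 \<longrightarrow>
       lamstar q' K C \<ge> lamstar q K C \<and>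
       (lamstar q K C \<noteq> \<infinity> \<longrightarrow> lamstar q' K C > lamstar q K C))
  \<and> (1 \<le> C' \<and> C' < C \<longrightarrow>
       lamstar q K C' \<ge> lamstar q K C \<and>
       (lamstar q K C \<noteq> \<infinity> \<longrightarrow> lamstar q K C' > lamstar q K C))
  \<and> (2 \<le> K \<and> 2 * C \<le> K - 2 \<longrightarrow>
       lamstar q (K - 2) C \<ge> lamstar q K C \<and>
       (lamstar q K C \<noteq> \<infinity> \<longrightarrow> lamstar q (K - 2) C > lamstar q K C))
  \<and> (odd K \<longrightarrow>
       lamstar q (K + 1) C \<ge> lamstar q K C \<and>
       (lamstar q K C \<noteq> \<infinity> \<longrightarrow> lamstar q (K + 1) C > lamstar q K C))
  \<and> (odd K \<longrightarrow>
       lamstar q (K - 1) C \<ge> lamstar q K C \<and>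
       (lamstar q K C \<noteq> \<infinity> \<longrightarrow> lamstar q (K - 1) C > lamstar q K C))"
  using lamstar_mono_precision[OF q C(1), of q' K] lamstar_antimono_capacity[OF q, of C' C K]
    lamstar_feed_minus_two[OF q C(1), of K] lamstar_odd_feed_Suc[OF q C(1), of K]
    lamstar_odd_feed_pred[OF q C(1), of K]
  by blast

end
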